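(* In the symmetric first-price sealed-bid auction with $n=2$ bidders and uniform prior $F=\mathrm{Id}$ on $[0,1]$, and for $0<\delta\le\frac{1}{10}$, the operator $\beta\mapsto DU(\vec\beta)$ on $\mathcal{B}_\delta$ is neither monotone, nor pseudo-monotone, nor quasi-monotone (in the senses defined in the context).
   Context: $V:=W^{1,1}(0,1)$. For $\delta>0$, $\mathcal{B}_\delta:=\{\beta\in V:0\le\beta\le1\text{ a.e.},\ \delta\le\beta'\text{ a.e.},\ \beta(0)=0\}$. Two bidders with values i.i.d. uniform on $[0,1]$. First-price ex-ante utility of bidder 1 bidding by $\beta$ against the other bidding by $\tilde\beta$: $U(\beta,\tilde\beta)=\int_0^1(x-\beta(x))\int_0^1\chi_{\{\beta(x)>\tilde\beta(y)\}}\,\mathrm{d}y\,\mathrm{d}x$. For $\beta\in\mathcal{B}_\delta$, $\vec\beta=(\beta,\beta)$ and $DU(\vec\beta)[d]:=\lim_{\varepsilon\to0}\varepsilon^{-1}(U(\beta+\varepsilon d,\beta)-U(\beta,\beta))$ for $d\in V$. The operator is monotone if $(DU(\vec{\tilde\beta})-DU(\vec\beta))[\tilde\beta-\beta]\le0$ for all $\beta,\tilde\beta\in\mathcal{B}_\delta$; pseudo-monotone if for all $\beta,\tilde\beta\in\mathcal{B}_\delta$, $DU(\vec\beta)[\tilde\beta-\beta]\le0$ implies $DU(\vec{\tilde\beta})[\tilde\beta-\beta]\le0$; quasi-monotone if for all $\beta,\tilde\beta\in\mathcal{B}_\delta$, $DU(\vec\beta)[\tilde\beta-\beta]<0$ implies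 $DU(\vec{\tilde\beta})[\tilde\beta-\beta]\le0$. *)

theory Defs
  imports "HOL-Analysis.Analysis"
begin

text \<open>Functions are \<open>real \<Rightarrow> real\<close>; only their values on [0,1] matter.
  The Sobolev space W^{1,1}(0,1) is represented by its absolutely continuous
  representatives: f is an indefinite integral of an L^1 function g
  (its weak derivative).\<close>

definition weak_deriv :: "(real \<Rightarrow> real) \<Rightarrow> (real \<Rightarrow> real) \<Rightarrow> bool" where
  "weak_deriv f g \<longleftrightarrow> set_integrable lborel {0..1} g \<and>
     (\<forall>x\<in>{0..1}. f x = f 0 + (LBINT t:{0..x}. g t))"

definition W11 :: "(real \<Rightarrow> real) set" where
  "W11 = {f. \<exists>g. weak_deriv f g}"

definition Bdelta :: "real \<Rightarrow> (real \<Rightarrow> real) set" where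
  "Bdelta \<delta> = {\<beta>. \<beta> \<in> W11 \<and> (\<forall>x\<in>{0..1}. 0 \<le> \<beta> x \<and> \<beta> x \<le> 1) \<and>
      (\<exists>g. weak_deriv \<beta> g \<and> (AE x in lebesgue_on {0..1}. \<delta> \<le> g x)) \<and> \<beta> 0 = 0}"

text \<open>First-price ex-ante utility, two bidders, values i.i.d. uniform on [0,1].\<close>
definition U :: "(real \<Rightarrow> real) \<Rightarrow> (real \<Rightarrow> real) \<Rightarrow> real" where
  "U \<beta> \<beta>' = (LBINT x:{0..1}. (x - \<beta> x) *
      (LBINT y:{0..1}. (if \<beta> x > \<beta>' y then 1 else 0)))"

definition DU :: "(real \<Rightarrow> real) \<Rightarrow> (real \<Rightarrow> real) \<Rightarrow> real" where
  "DU \<beta> d = Lim (at 0) (\<lambda>\<epsilon>. (U (\<lambda>x. \<beta> x + \<epsilon> * d x) \<beta> - U \<beta> \<beta>) / \<epsilon>)"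

definition monotone_DU :: "real \<Rightarrow> bool" where
  "monotone_DU \<delta> \<longleftrightarrow> (\<forall>\<beta>\<in>Bdelta \<delta>. \<forall>\<beta>'\<in>Bdelta \<delta>.
     DU \<beta>' (\<lambda>x. \<beta>' x - \<beta> x) - DU \<beta> (\<lambda>x. \<beta>' x - \<beta> x) \<le> 0)"

definition pseudo_monotone_DU :: "real \<Rightarrow> bool" where
  "pseudo_monotone_DU \<delta> \<longleftrightarrow> (\<forall>\<beta>\<in>Bdelta \<delta>. \<forall>\<beta>'\<in>Bdelta \<delta>.
     DU \<beta> (\<lambda>x. \<beta>' x - \<beta> x) \<le> 0 \<longrightarrow> DU \<beta>' (\<lambda>x. \<beta>' x - \<beta> x) \<le> 0)"

definition quasi_monotone_DU :: "real \<Rightarrow> bool" where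
  "quasi_monotone_DU \<delta> \<longleftrightarrow> (\<forall>\<beta>\<in>Bdelta \<delta>. \<forall>\<beta>'\<in>Bdelta \<delta>.
     DU \<beta> (\<lambda>x. \<beta>' x - \<beta> x) < 0 \<longrightarrow> DU \<beta>' (\<lambda>x. \<beta>' x - \<beta> x) \<le> 0)"

end

theory Submission
  imports Defs
begin

text \<open>The strategies \<beta>1(x) = 11x/20 and \<beta>2(x) = min x (9/20 + x/10) both lie in B_\<delta>
  for \<delta> \<le> 1/10 (the slope of \<beta>2 on [1/2,1] is 1/10). Let G_\<beta>(v) be the probability that an
  opponent bidding by \<beta> bids below v, so that U(\<beta>, \<gamma>) = \<integral> (x - \<beta> x) G_\<gamma>(\<beta> x) dx.
  Since G_\<beta> is Lipschitz, the difference quotients are dominated and one may differentiate under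
  the integral: DU(\<beta>)[d] = \<integral> d x ((x - \<beta> x) G_\<beta>'(\<beta> x) - G_\<beta>(\<beta> x)) dx, where
  G_\<beta>(\<beta> x) = x for strictly increasing \<beta>. The two resulting piecewise polynomial integrals give
  DU(\<beta>1)[\<beta>2 - \<beta>1] = -9/880 < 0 < 9/320 = DU(\<beta>2)[\<beta>2 - \<beta>1], which violates
  monotonicity, pseudo-monotonicity and quasi-monotonicity at once.\<close>

definition win_prob :: "(real \<Rightarrow> real) \<Rightarrow> real \<Rightarrow> real" where
  "win_prob \<beta> v = (LBINT y:{0..1}. (if v > \<beta> y then 1 else 0))"

lemma U_eq_win_prob: "U \<beta> \<beta>' = (LBINT x:{0..1}. (x - \<beta> x) * win_prob \<beta>' (\<beta> x))"
  by (simp add: U_def win_prob_def)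

lemma win_prob_eq_threshold:
  assumes "0 \<le> t" "t \<le> 1"
    and "\<And>y. 0 \<le> y \<Longrightarrow> y \<le> 1 \<Longrightarrow> y \<noteq> t \<Longrightarrow> v > \<beta> y \<longleftrightarrow> y < t"
  shows "win_prob \<beta> v = t"
proof -
  have "win_prob \<beta> v = (LINT y|lborel. indicator {0..t} y)"
    unfolding win_prob_def set_lebesgue_integral_def
    by (rule integral_discrete_difference[where X="{t}"]) (use assms in \<open>auto simp: indicator_def\<close>)
  with assms show ?thesis by simp
qed

lemma win_prob_diagonal:
  assumes "strict_mono_on {0..1} \<beta>" "t \<in> {0..1}"
  shows "win_prob \<beta> (\<beta> t) = t"
  using assms by (intro win_prob_eq_threshold) (auto simp: strict_mono_on_less)

lemma win_prob_bounds:
  assumes [measurable]: "\<beta> \<in> borel_measurable borel"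
  shows "0 \<le> win_prob \<beta> v" "win_prob \<beta> v \<le> 1"
proof -
  have int: "set_integrable lborel {0..1} (\<lambda>y. if v > \<beta> y then 1 else 0 :: real)"
    unfolding set_integrable_def
    by (rule integrableI_bounded_set_indicator[where B=1]) auto
  show "0 \<le> win_prob \<beta> v"
    unfolding win_prob_def set_lebesgue_integral_def by (rule integral_nonneg_AE) auto
  have "win_prob \<beta> v \<le> (LBINT y:{0..1::real}. (1::real))"
    unfolding win_prob_def by (rule set_integral_mono[OF int]) (auto simp: set_integrable_def)
  then show "win_prob \<beta> v \<le> 1" by (simp add: set_lebesgue_integral_def)
qed

lemma integral_dominated_convergence_at:
  fixes s :: "real \<Rightarrow> 'a \<Rightarrow> 'b::{banach, second_countable_topology}"
  assumes "f \<in> borel_measurable M" "\<And>t. s t \<in> borel_measurable M" "integrable M w"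
    and lim: "AE x in M. ((\<lambda>t. s t x) \<longlongrightarrow> f x) (at a)"
    and bound: "\<And>t. AE x in M. norm (s t x) \<le> w x"
  shows "((\<lambda>t. integral\<^sup>L M (s t)) \<longlongrightarrow> integral\<^sup>L M f) (at a)"
  unfolding tendsto_at_iff_sequentially comp_def
proof (intro allI impI)
  fix X :: "nat \<Rightarrow> real" assume X: "\<forall>i. X i \<in> UNIV - {a}" "X \<longlonglongrightarrow> a"
  show "(\<lambda>i. integral\<^sup>L M (s (X i))) \<longlonglongrightarrow> integral\<^sup>L M f"
  proof (rule integral_dominated_convergence[OF assms(1,2,3) _ bound])
    show "AE x in M. (\<lambda>i. s (X i) x) \<longlonglongrightarrow> f x"
      using lim by eventually_elim (use X in \<open>auto simp: tendsto_at_iff_sequentially comp_def\<close>)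
  qed
qed

lemma tendsto_perturbed_integrand:
  fixes G :: "real \<Rightarrow> real"
  assumes "(G has_real_derivative D) (at b)"
  shows "((\<lambda>\<epsilon>. c * ((G (b + \<epsilon> * e) - G b) / \<epsilon>) - e * G (b + \<epsilon> * e)) \<longlongrightarrow> e * (c * D - G b)) (at 0)"
proof -
  have chain: "((\<lambda>\<epsilon>. G (b + \<epsilon> * e)) has_real_derivative D * e) (at 0)"
    by (rule DERIV_chain2[where g="\<lambda>\<epsilon>. b + \<epsilon> * e" and x=0]) (use assms in \<open>auto intro!: derivative_eq_intros\<close>)
  then have "((\<lambda>\<epsilon>. (G (b + \<epsilon> * e) - G b) / \<epsilon>) \<longlongrightarrow> D * e) (at 0)"
    by (simp add: has_field_derivative_iff)
  moreover have "((\<lambda>\<epsilon>. G (b + \<epsilon> * e)) \<longlongrightarrow> G b) (at 0)"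
    using DERIV_isCont[OF chain] by (simp add: isCont_def)
  ultimately have "((\<lambda>\<epsilon>. c * ((G (b + \<epsilon> * e) - G b) / \<epsilon>) - e * G (b + \<epsilon> * e)) \<longlongrightarrow> c * (D * e) - e * G b) (at 0)"
    by (intro tendsto_intros)
  then show ?thesis by (simp add: algebra_simps)
qed

lemma lipschitz_diff_quotient_bound:
  fixes G :: "real \<Rightarrow> real"
  assumes "L-lipschitz_on UNIV G"
  shows "\<bar>(G (b + \<epsilon> * e) - G b) / \<epsilon>\<bar> \<le> L * \<bar>e\<bar>"
proof (cases "\<epsilon> = 0")
  case False
  have "\<bar>G (b + \<epsilon> * e) - G b\<bar> \<le> L * \<bar>\<epsilon> * e\<bar>"
    using lipschitz_onD[OF assms, of "b + \<epsilon> * e" b] by (simp add: dist_real_def)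
  with False show ?thesis by (simp add: abs_divide abs_mult divide_le_eq mult_ac)
qed (use lipschitz_on_nonneg[OF assms] in simp)

lemma perturbed_integrand_bound:
  fixes G :: "real \<Rightarrow> real"
  assumes "L-lipschitz_on UNIV G" "\<And>v. \<bar>G v\<bar> \<le> 1" "\<bar>c\<bar> \<le> C" "\<bar>e\<bar> \<le> E"
  shows "\<bar>c * ((G (b + \<epsilon> * e) - G b) / \<epsilon>) - e * G (b + \<epsilon> * e)\<bar> \<le> C * (L * E) + E * 1"
proof (rule order_trans[OF abs_triangle_ineq4 add_mono])
  have "\<bar>(G (b + \<epsilon> * e) - G b) / \<epsilon>\<bar> \<le> L * E"
    using lipschitz_diff_quotient_bound[OF assms(1)] lipschitz_on_nonneg[OF assms(1)] assms(4)
    by (meson mult_left_mono order_trans)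
  then show "\<bar>c * ((G (b + \<epsilon> * e) - G b) / \<epsilon>)\<bar> \<le> C * (L * E)"
    unfolding abs_mult using assms(3) by (intro mult_mono) auto
  show "\<bar>e * G (b + \<epsilon> * e)\<bar> \<le> E * 1"
    unfolding abs_mult using assms(2,4) by (intro mult_mono) auto
qed

lemma U_perturbed_diff_quotient:
  assumes cont: "continuous_on UNIV \<beta>" "continuous_on UNIV d" "continuous_on UNIV (win_prob \<beta>)"
    and "\<epsilon> \<noteq> 0"
  shows "(U (\<lambda>x. \<beta> x + \<epsilon> * d x) \<beta> - U \<beta> \<beta>) / \<epsilon> =
    (LBINT x:{0..1}. (x - \<beta> x) * ((win_prob \<beta> (\<beta> x + \<epsilon> * d x) - win_prob \<beta> (\<beta> x)) / \<epsilon>)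
                     - d x * win_prob \<beta> (\<beta> x + \<epsilon> * d x))"
proof -
  let ?u = "\<lambda>t x. (x - (\<beta> x + t * d x)) * win_prob \<beta> (\<beta> x + t * d x)"
  have int: "set_integrable lborel {0..1} (?u t)" for t
    by (rule borel_integrable_atLeastAtMost', intro continuous_intros continuous_on_compose2[OF cont(3)])
       (use cont in \<open>auto intro: continuous_on_subset\<close>)
  have "(U (\<lambda>x. \<beta> x + \<epsilon> * d x) \<beta> - U \<beta> \<beta>) / \<epsilon> = (LBINT x:{0..1}. (?u \<epsilon> x - ?u 0 x) / \<epsilon>)"
    using set_integral_diff(2)[OF int[of \<epsilon>] int[of 0]] by (simp add: U_eq_win_prob)
  also have "\<dots> = (LBINT x:{0..1}. (x - \<beta> x) * ((win_prob \<beta> (\<beta> x + \<epsilon> * d x) - win_prob \<beta> (\<beta> x)) / \<epsilon>)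
                     - d x * win_prob \<beta> (\<beta> x + \<epsilon> * d x))"
    using \<open>\<epsilon> \<noteq> 0\<close> by (intro set_lebesgue_integral_cong) (auto simp: field_simps)
  finally show ?thesis .
qed

lemma DU_eq_integral:
  assumes cont: "continuous_on UNIV \<beta>" "continuous_on UNIV d"
    and lip: "L-lipschitz_on UNIV (win_prob \<beta>)"
    and "countable S"
    and deriv: "\<And>x. x \<in> {0..1} - S \<Longrightarrow> (win_prob \<beta> has_real_derivative g x) (at (\<beta> x))"
    and [measurable]: "g \<in> borel_measurable borel"
  shows "DU \<beta> d = (LBINT x:{0..1}. d x * ((x - \<beta> x) * g x - win_prob \<beta> (\<beta> x)))"
proof -
  let ?G = "win_prob \<beta>"
  let ?q = "\<lambda>\<epsilon> x. (x - \<beta> x) * ((?G (\<beta> x + \<epsilon> * d x) - ?G (\<beta> x)) / \<epsilon>) - d x * ?G (\<beta> x + \<epsilon> * d x)"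
  have contG: "continuous_on UNIV ?G"
    using lip by (rule lipschitz_on_continuous_on)
  have meas [measurable]: "\<beta> \<in> borel_measurable borel" "d \<in> borel_measurable borel" "?G \<in> borel_measurable borel"
    using contG cont by (auto intro: borel_measurable_continuous_onI)
  obtain B where B: "\<And>x. x \<in> {0..1} \<Longrightarrow> \<bar>\<beta> x\<bar> \<le> B"
    by (rule continuous_on_compact_bound[OF compact_Icc[of 0 1] continuous_on_subset[OF cont(1) subset_UNIV]]) auto
  obtain E where E: "\<And>x. x \<in> {0..1} \<Longrightarrow> \<bar>d x\<bar> \<le> E"
    by (rule continuous_on_compact_bound[OF compact_Icc[of 0 1] continuous_on_subset[OF cont(2) subset_UNIV]]) auto
  have "AE x in lborel. x \<notin> S"
    by (rule AE_discrete_difference[OF \<open>countable S\<close>]) auto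
  then have lim: "AE x in lborel. ((\<lambda>\<epsilon>. indicator {0..1} x * ?q \<epsilon> x) \<longlongrightarrow>
                     indicator {0..1} x * (d x * ((x - \<beta> x) * g x - ?G (\<beta> x)))) (at 0)"
  proof eventually_elim
    case (elim x)
    show ?case
    proof (cases "x \<in> {0..1}")
      case True
      then show ?thesis
        using elim by (intro tendsto_mult_left tendsto_perturbed_integrand deriv) auto
    qed simp
  qed
  have G_le_1: "\<bar>?G v\<bar> \<le> 1" for v
    using win_prob_bounds[OF meas(1), of v] by simp
  have bound: "\<bar>indicator {0..1} x * ?q \<epsilon> x\<bar> \<le> indicator {0..1} x * ((1 + B) * (L * E) + E * 1)" for \<epsilon> x
  proof (cases "x \<in> {0..1}")
    case True
    then have "\<bar>?q \<epsilon> x\<bar> \<le> (1 + B) * (L * E) + E * 1"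
      using B[OF True] E[OF True] by (intro perturbed_integrand_bound[OF lip G_le_1]) auto
    with True show ?thesis by simp
  qed simp
  have "((\<lambda>\<epsilon>. LBINT x:{0..1}. ?q \<epsilon> x) \<longlongrightarrow> (LBINT x:{0..1}. d x * ((x - \<beta> x) * g x - ?G (\<beta> x)))) (at 0)"
    unfolding set_lebesgue_integral_def real_scaleR_def
    by (rule integral_dominated_convergence_at[OF _ _ _ lim,
          where w="\<lambda>x. indicator {0..1} x * ((1 + B) * (L * E) + E * 1)"])
       (use bound in auto)
  moreover have "\<forall>\<^sub>F \<epsilon> in at 0. (LBINT x:{0..1}. ?q \<epsilon> x) = (U (\<lambda>x. \<beta> x + \<epsilon> * d x) \<beta> - U \<beta> \<beta>) / \<epsilon>"
    unfolding eventually_at_filter using U_perturbed_diff_quotient[OF cont contG] by simp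
  ultimately show ?thesis
    unfolding DU_def by (intro tendsto_Lim) (auto dest: tendsto_cong[THEN iffD1, rotated])
qed

lemma weak_derivI:
  fixes f g :: "real \<Rightarrow> real"
  assumes "finite S" "continuous_on {0..1} f"
    and deriv: "\<And>x. x \<in> {0<..<1} - S \<Longrightarrow> (f has_real_derivative g x) (at x)"
    and [measurable]: "g \<in> borel_measurable borel"
    and bound: "\<And>x. x \<in> {0..1} \<Longrightarrow> \<bar>g x\<bar> \<le> B"
  shows "weak_deriv f g"
proof -
  have int: "set_integrable lborel {0..x} g" if "x \<le> 1" for x
    unfolding set_integrable_def
    by (rule integrableI_bounded_set_indicator[where B=B])
       (use bound that emeasure_lborel_cbox_finite[of 0 x] in auto)
  have "f x = f 0 + (LBINT t:{0..x}. g t)" if x: "x \<in> {0..1}" for x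
  proof -
    have "(g has_integral f x - f 0) {0..x}"
    proof (rule fundamental_theorem_of_calculus_interior_strong[OF \<open>finite S\<close>])
      show "continuous_on {0..x} f"
        using assms(2) by (rule continuous_on_subset) (use x in auto)
      show "(f has_vector_derivative g y) (at y)" if "y \<in> {0<..<x} - S" for y
        using deriv[of y] that x by (simp add: has_real_derivative_iff_has_vector_derivative)
    qed (use x in auto)
    then show ?thesis
      using set_borel_integral_eq_integral(2)[OF int] x by (simp add: integral_unique)
  qed
  then show ?thesis
    unfolding weak_deriv_def using int[OF order_refl] by blast
qed

lemma Bdelta_memI:
  assumes "weak_deriv \<beta> g" "\<And>x. x \<in> {0..1} \<Longrightarrow> 0 \<le> \<beta> x \<and> \<beta> x \<le> 1"
    and "\<And>x. x \<in> {0..1} \<Longrightarrow> \<delta> \<le> g x" and "\<beta> 0 = 0"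
  shows "\<beta> \<in> Bdelta \<delta>"
  unfolding Bdelta_def W11_def using assms by (auto intro!: AE_I2 exI[of _ g])

lemma set_integral_piecewise_FTC:
  fixes f p q P Q :: "real \<Rightarrow> real"
  assumes "a \<le> c" "c \<le> b"
    and f_p: "\<And>x. x \<in> {a..c} \<Longrightarrow> f x = p x" and f_q: "\<And>x. x \<in> {c..b} \<Longrightarrow> f x = q x"
    and cont: "continuous_on UNIV p" "continuous_on UNIV q"
    and P: "\<And>x. (P has_real_derivative p x) (at x)" and Q: "\<And>x. (Q has_real_derivative q x) (at x)"
  shows "(LBINT x:{a..b}. f x) = (P c - P a) + (Q b - Q c)"
proof -
  have "(p has_integral P c - P a) {a..c}"
    using \<open>a \<le> c\<close> P by (intro fundamental_theorem_of_calculus)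
      (auto simp: has_real_derivative_iff_has_vector_derivative[symmetric] intro: DERIV_subset)
  then have "(f has_integral P c - P a) {a..c}"
    by (rule has_integral_eq[rotated]) (simp add: f_p)
  moreover have "(q has_integral Q b - Q c) {c..b}"
    using \<open>c \<le> b\<close> Q by (intro fundamental_theorem_of_calculus)
      (auto simp: has_real_derivative_iff_has_vector_derivative[symmetric] intro: DERIV_subset)
  then have "(f has_integral Q b - Q c) {c..b}"
    by (rule has_integral_eq[rotated]) (simp add: f_q)
  ultimately have "(f has_integral (P c - P a) + (Q b - Q c)) {a..b}"
    by (rule has_integral_combine[OF \<open>a \<le> c\<close> \<open>c \<le> b\<close>])
  moreover have "continuous_on {a..b} f"
  proof -
    have "continuous_on {a..c} f" "continuous_on {c..b} f"
      using continuous_on_eq[OF continuous_on_subset[OF cont(1)], of "{a..c}" f]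
        continuous_on_eq[OF continuous_on_subset[OF cont(2)], of "{c..b}" f] f_p f_q by auto
    then have "continuous_on ({a..c} \<union> {c..b}) f"
      by (intro continuous_on_closed_Un) auto
    then show ?thesis using ivl_disj_un_two_touch(4)[OF assms(1,2)] by simp
  qed
  ultimately show ?thesis
    using set_borel_integral_eq_integral(2)[OF borel_integrable_atLeastAtMost'] integral_unique by metis
qed

definition beta_lin :: "real \<Rightarrow> real" where
  "beta_lin x = 11/20 * x"

definition beta_kink :: "real \<Rightarrow> real" where
  "beta_kink x = min x (9/20 + x/10)"

lemma beta_kink_below: "x \<le> 1/2 \<Longrightarrow> beta_kink x = x"
  and beta_kink_above: "1/2 \<le> x \<Longrightarrow> beta_kink x = 9/20 + x/10"
  by (simp_all add: beta_kink_def)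

lemma strict_mono_beta_lin: "strict_mono_on {0..1} beta_lin"
  by (rule strict_mono_onI) (simp add: beta_lin_def)

lemma strict_mono_beta_kink: "strict_mono_on {0..1} beta_kink"
  by (rule strict_mono_onI) (auto simp: beta_kink_def)

lemma DERIV_beta_kink:
  assumes "x \<noteq> 1/2"
  shows "(beta_kink has_real_derivative (if x < 1/2 then 1 else 1/10)) (at x)"
proof (cases "x < 1/2")
  case True
  have "(beta_kink has_real_derivative 1) (at x)"
    by (rule has_field_derivative_transform_within_open[of "\<lambda>x. x" _ _ "{..<1/2}"])
       (use True in \<open>auto simp: beta_kink_def\<close>)
  with True show ?thesis by simp
next
  case False
  have "(beta_kink has_real_derivative 1/10) (at x)"
    by (rule has_field_derivative_transform_within_open[of "\<lambda>x. 9/20 + x/10" _ _ "{1/2<..}"])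
       (use False assms in \<open>auto simp: beta_kink_def intro!: derivative_eq_intros\<close>)
  with False show ?thesis by simp
qed

lemma beta_lin_in_Bdelta:
  assumes "\<delta> \<le> 11/20"
  shows "beta_lin \<in> Bdelta \<delta>"
proof (rule Bdelta_memI)
  show "weak_deriv beta_lin (\<lambda>_. 11/20)"
    unfolding beta_lin_def
    by (rule weak_derivI[where S="{}" and B="11/20"]) (auto intro!: continuous_intros derivative_eq_intros)
qed (use assms in \<open>auto simp: beta_lin_def\<close>)

lemma beta_kink_in_Bdelta:
  assumes "\<delta> \<le> 1/10"
  shows "beta_kink \<in> Bdelta \<delta>"
proof (rule Bdelta_memI)
  show "weak_deriv beta_kink (\<lambda>x. if x < 1/2 then 1 else 1/10)"
  proof (rule weak_derivI[where S="{1/2}" and B=1])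
    show "continuous_on {0..1} beta_kink"
      unfolding beta_kink_def by (intro continuous_intros) auto
    show "(\<lambda>x::real. if x < 1/2 then 1 else 1/10 :: real) \<in> borel_measurable borel"
      by measurable
    show "(beta_kink has_real_derivative (if x < 1/2 then 1 else 1/10)) (at x)"
      if "x \<in> {0<..<1} - {1/2}" for x
      using that by (intro DERIV_beta_kink) auto
  qed auto
qed (use assms in \<open>auto simp: beta_kink_def\<close>)

lemma win_prob_beta_lin: "win_prob beta_lin v = max 0 (min 1 (20/11 * v))"
  by (rule win_prob_eq_threshold) (auto simp: beta_lin_def max_def min_def)

lemma win_prob_beta_kink: "win_prob beta_kink v = max 0 (min 1 (max v (10 * v - 9/2)))"
  by (rule win_prob_eq_threshold) (auto simp: beta_kink_def max_def min_def)

lemma lipschitz_win_prob_beta_lin: "(20/11)-lipschitz_on UNIV (win_prob beta_lin)"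
  by (rule lipschitz_onI) (auto simp: win_prob_beta_lin dist_real_def max_def min_def abs_if)

lemma lipschitz_win_prob_beta_kink: "10-lipschitz_on UNIV (win_prob beta_kink)"
  by (rule lipschitz_onI) (auto simp: win_prob_beta_kink dist_real_def max_def min_def abs_if)

lemma DERIV_win_prob_beta_lin:
  assumes "0 < v" "v < 11/20"
  shows "(win_prob beta_lin has_real_derivative 20/11) (at v)"
  by (rule has_field_derivative_transform_within_open[of "\<lambda>v. 20/11 * v" _ _ "{0<..<11/20}"])
     (use assms in \<open>auto simp: win_prob_beta_lin intro!: derivative_eq_intros\<close>)

lemma DERIV_win_prob_beta_kink:
  assumes "0 < v" "v < 11/20" "v \<noteq> 1/2"
  shows "(win_prob beta_kink has_real_derivative (if v < 1/2 then 1 else 10)) (at v)"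
proof (cases "v < 1/2")
  case True
  have "(win_prob beta_kink has_real_derivative 1) (at v)"
    by (rule has_field_derivative_transform_within_open[of "\<lambda>v. v" _ _ "{0<..<1/2}"])
       (use True assms in \<open>auto simp: win_prob_beta_kink\<close>)
  with True show ?thesis by simp
next
  case False
  have "(win_prob beta_kink has_real_derivative 10) (at v)"
    by (rule has_field_derivative_transform_within_open[of "\<lambda>v. 10 * v - 9/2" _ _ "{1/2<..<11/20}"])
       (use False assms in \<open>auto simp: win_prob_beta_kink intro!: derivative_eq_intros\<close>)
  with False show ?thesis by simp
qed

lemma DU_beta_lin: "DU beta_lin (\<lambda>x. beta_kink x - beta_lin x) = - 9/880"
proof -
  have "DU beta_lin (\<lambda>x. beta_kink x - beta_lin x) =
      (LBINT x:{0..1}. (beta_kink x - beta_lin x) * ((x - beta_lin x) * (20/11) - win_prob beta_lin (beta_lin x)))"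
  proof (rule DU_eq_integral[OF _ _ lipschitz_win_prob_beta_lin, where S="{0,1}"])
    show "(win_prob beta_lin has_real_derivative 20/11) (at (beta_lin x))" if "x \<in> {0..1} - {0,1}" for x
      using that by (intro DERIV_win_prob_beta_lin) (auto simp: beta_lin_def)
  qed (auto simp: beta_lin_def beta_kink_def intro!: continuous_intros)
  also have "\<dots> = (LBINT x:{0..1}. (beta_kink x - beta_lin x) * ((x - beta_lin x) * (20/11) - x))"
    by (intro set_lebesgue_integral_cong) (auto simp: win_prob_diagonal[OF strict_mono_beta_lin])
  also have "\<dots> = - 9/880"
    by (subst set_integral_piecewise_FTC[where c="1/2" and p="\<lambda>x. - 9/110 * x^2" and q="\<lambda>x. - 9/110 * (x - x^2)"
          and P="\<lambda>x. - 3/110 * x^3" and Q="\<lambda>x. - 9/110 * (x^2/2 - x^3/3)"])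
       (auto simp: beta_lin_def beta_kink_below beta_kink_above power2_eq_square power3_eq_cube field_simps
         intro!: continuous_intros derivative_eq_intros)
  finally show ?thesis .
qed

lemma DU_beta_kink: "DU beta_kink (\<lambda>x. beta_kink x - beta_lin x) = 9/320"
proof -
  have "DU beta_kink (\<lambda>x. beta_kink x - beta_lin x) =
      (LBINT x:{0..1}. (beta_kink x - beta_lin x) *
         ((x - beta_kink x) * (if x < 1/2 then 1 else 10) - win_prob beta_kink (beta_kink x)))"
  proof (rule DU_eq_integral[OF _ _ lipschitz_win_prob_beta_kink, where S="{0,1/2,1}"])
    show "(win_prob beta_kink has_real_derivative (if x < 1/2 then 1 else 10)) (at (beta_kink x))"
      if "x \<in> {0..1} - {0,1/2,1}" for x
      using DERIV_win_prob_beta_kink[of "beta_kink x"] that by (auto simp: beta_kink_def min_def)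
    show "(\<lambda>x::real. if x < 1/2 then 1 else 10 :: real) \<in> borel_measurable borel"
      by measurable
  qed (auto simp: beta_lin_def beta_kink_def intro!: continuous_intros)
  also have "\<dots> = (LBINT x:{0..1}. (beta_kink x - beta_lin x) *
         ((x - beta_kink x) * (if x < 1/2 then 1 else 10) - x))"
    by (intro set_lebesgue_integral_cong) (auto simp: win_prob_diagonal[OF strict_mono_beta_kink])
  also have "\<dots> = 9/320"
    by (subst set_integral_piecewise_FTC[where c="1/2" and p="\<lambda>x. - 9/20 * x^2" and q="\<lambda>x. 9/20 * (1 - x) * (8 * x - 9/2)"
          and P="\<lambda>x. - 3/20 * x^3" and Q="\<lambda>x. 9/20 * (- 9/2 * x + 25/4 * x^2 - 8/3 * x^3)"])
       (auto simp: beta_lin_def beta_kink_below beta_kink_above power2_eq_square power3_eq_cube field_simps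
         intro!: continuous_intros derivative_eq_intros)
  finally show ?thesis .
qed

theorem proposition2:
  fixes \<delta> :: real
  assumes "0 < \<delta>" and "\<delta> \<le> 1/10"
  shows "\<not> monotone_DU \<delta> \<and> \<not> pseudo_monotone_DU \<delta> \<and> \<not> quasi_monotone_DU \<delta>"
proof -
  have "beta_lin \<in> Bdelta \<delta>" "beta_kink \<in> Bdelta \<delta>"
    using assms by (auto intro: beta_lin_in_Bdelta beta_kink_in_Bdelta)
  then show ?thesis
    unfolding monotone_DU_def pseudo_monotone_DU_def quasi_monotone_DU_def
    using DU_beta_lin DU_beta_kink by force
qed

end
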